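(* Let $A=D+N\in\mathcal{M}_n(\mathbb{H})$, where $D$ is a diagonal matrix with real entries and $N$ is a strictly upper triangular (hence nilpotent) matrix that is cycle-free. Then $W(A)$ is convex.
   Context: $\mathbb{H}$ denotes the real quaternions. The numerical range of $A\in\mathcal{M}_n(\mathbb{H})$ is $W(A)=\{\mathbf{x}^*A\mathbf{x}:\mathbf{x}\in\mathbb{H}^n,\ \mathbf{x}^*\mathbf{x}=1\}$. The graph $\mathcal{G}_N$ of $N=[a_{ij}]$ is the undirected graph on $\{1,\dots,n\}$ with an edge between $i$ and $j$ (a loop if $i=j$) whenever $a_{ij}\ne0$ or $a_{ji}\ne0$; $N$ is cycle-free if $\mathcal{G}_N$ contains no cycle. *)

theory Defs
  imports "HOL-Analysis.Analysis"
begin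

datatype quat = Quat (Re: real) (Im1: real) (Im2: real) (Im3: real)

lemma quat_eq_iff: "x = y \<longleftrightarrow> Re x = Re y \<and> Im1 x = Im1 y \<and> Im2 x = Im2 y \<and> Im3 x = Im3 y"
  by (cases x; cases y) auto

instantiation quat :: real_algebra_1
begin

definition "0 = Quat 0 0 0 0"
definition "1 = Quat 1 0 0 0"
definition "x + y = Quat (Re x + Re y) (Im1 x + Im1 y) (Im2 x + Im2 y) (Im3 x + Im3 y)"
definition "- x = Quat (- Re x) (- Im1 x) (- Im2 x) (- Im3 x)"
definition "x - y = Quat (Re x - Re y) (Im1 x - Im1 y) (Im2 x - Im2 y) (Im3 x - Im3 y)"
definition "scaleR r x = Quat (r * Re x) (r * Im1 x) (r * Im2 x) (r * Im3 x)"
definition "x * y = Quat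
   (Re x * Re y - Im1 x * Im1 y - Im2 x * Im2 y - Im3 x * Im3 y)
   (Re x * Im1 y + Im1 x * Re y + Im2 x * Im3 y - Im3 x * Im2 y)
   (Re x * Im2 y - Im1 x * Im3 y + Im2 x * Re y + Im3 x * Im1 y)
   (Re x * Im3 y + Im1 x * Im2 y - Im2 x * Im1 y + Im3 x * Re y)"

instance
  by intro_classes
    (auto simp: quat_eq_iff zero_quat_def one_quat_def plus_quat_def uminus_quat_def
       minus_quat_def scaleR_quat_def times_quat_def algebra_simps)

end

definition qcnj :: "quat \<Rightarrow> quat" where
  "qcnj x = Quat (Re x) (- Im1 x) (- Im2 x) (- Im3 x)"

text \<open>An n x n quaternion matrix is represented as a function nat \<Rightarrow> nat \<Rightarrow> quat}
  of which only the entries with indices below n matter; likewise vectors in H^n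
  are functions nat \<Rightarrow> quat restricted to indices below n.\<close>

definition numerical_range :: "nat \<Rightarrow> (nat \<Rightarrow> nat \<Rightarrow> quat) \<Rightarrow> quat set" where
  "numerical_range n A =
     {(\<Sum>i<n. \<Sum>j<n. qcnj (x i) * A i j * x j) | x :: nat \<Rightarrow> quat.
        (\<Sum>i<n. qcnj (x i) * x i) = 1}"

definition mat_adj :: "(nat \<Rightarrow> nat \<Rightarrow> quat) \<Rightarrow> nat \<Rightarrow> nat \<Rightarrow> bool" where
  "mat_adj N i j \<longleftrightarrow> N i j \<noteq> 0 \<or> N j i \<noteq> 0"

definition cycle_free :: "nat \<Rightarrow> (nat \<Rightarrow> nat \<Rightarrow> quat) \<Rightarrow> bool" where
  "cycle_free n N \<longleftrightarrow>
     (\<forall>i<n. \<not> mat_adj N i i) \<and>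
     \<not> (\<exists>vs. 3 \<le> length vs \<and> distinct vs \<and> set vs \<subseteq> {..<n} \<and>
            (\<forall>k<length vs. mat_adj N (vs ! k) (vs ! ((k + 1) mod length vs))))"

end

theory Submission
  imports Defs "HOL-Library.Transitive_Closure_Table"
begin

text \<open>
  A diagonal unitary similarity \<open>A \<mapsto> Q\<^sup>* A Q\<close> does not change the numerical
  range. Since the graph of \<open>N\<close> is a forest and \<open>N\<close> has at most one nonzero
  entry per edge, the unit phases on the diagonal of \<open>Q\<close> can be chosen edge by
  edge so that \<open>Q\<^sup>* N Q\<close>, and hence \<open>Q\<^sup>* (D + N) Q\<close>, has real entries:
  removing an edge separates its endpoints, so the phase of that edge can be
  corrected by rotating one side only.

  For a real matrix \<open>R\<close>, the set \<open>W(R)\<close> is invariant under \<open>w \<mapsto> p\<^sup>* w p\<close>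
  for unit quaternions \<open>p\<close>, and its intersection with \<open>\<complex>\<close> is the complex
  numerical range of \<open>R\<close>, which is convex by the Toeplitz--Hausdorff theorem.
  Every \<open>w\<close> is unitarily similar to \<open>Re w + |Im w| i\<close>; as \<open>|Im w|\<close> is a
  convex function and the complex slice is convex and symmetric under
  conjugation, \<open>W(R)\<close> is convex.
\<close>

section \<open>Quaternion arithmetic\<close>

lemma quat_components:
  "Re (x + y) = Re x + Re y" "Im1 (x + y) = Im1 x + Im1 y"
  "Im2 (x + y) = Im2 x + Im2 y" "Im3 (x + y) = Im3 x + Im3 y"
  "Re (x - y) = Re x - Re y" "Im1 (x - y) = Im1 x - Im1 y"
  "Im2 (x - y) = Im2 x - Im2 y" "Im3 (x - y) = Im3 x - Im3 y"
  "Re (x * y) = Re x * Re y - Im1 x * Im1 y - Im2 x * Im2 y - Im3 x * Im3 y"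
  "Im1 (x * y) = Re x * Im1 y + Im1 x * Re y + Im2 x * Im3 y - Im3 x * Im2 y"
  "Im2 (x * y) = Re x * Im2 y - Im1 x * Im3 y + Im2 x * Re y + Im3 x * Im1 y"
  "Im3 (x * y) = Re x * Im3 y + Im1 x * Im2 y - Im2 x * Im1 y + Im3 x * Re y"
  "Re (r *\<^sub>R x) = r * Re x" "Im1 (r *\<^sub>R x) = r * Im1 x"
  "Im2 (r *\<^sub>R x) = r * Im2 x" "Im3 (r *\<^sub>R x) = r * Im3 x"
  "Re (qcnj x) = Re x" "Im1 (qcnj x) = - Im1 x" "Im2 (qcnj x) = - Im2 x" "Im3 (qcnj x) = - Im3 x"
  "Re 0 = 0" "Im1 0 = 0" "Im2 0 = 0" "Im3 0 = 0"
  "Re 1 = 1" "Im1 1 = 0" "Im2 1 = 0" "Im3 1 = 0"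
  by (simp_all add: plus_quat_def minus_quat_def times_quat_def scaleR_quat_def qcnj_def
      zero_quat_def one_quat_def)

lemma quat_components_sum:
  "Re (sum f I) = (\<Sum>i\<in>I. Re (f i))" "Im1 (sum f I) = (\<Sum>i\<in>I. Im1 (f i))"
  "Im2 (sum f I) = (\<Sum>i\<in>I. Im2 (f i))" "Im3 (sum f I) = (\<Sum>i\<in>I. Im3 (f i))"
  by (induction I rule: infinite_finite_induct) (simp_all add: quat_components)

lemma qcnj_mult: "qcnj (x * y) = qcnj y * qcnj x"
  by (simp add: quat_eq_iff quat_components algebra_simps)

lemma qcnj_qcnj [simp]: "qcnj (qcnj x) = x"
  by (simp add: quat_eq_iff quat_components)

lemma qcnj_one [simp]: "qcnj 1 = 1"
  by (simp add: quat_eq_iff quat_components)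

lemma quat_in_Reals_iff: "x \<in> \<real> \<longleftrightarrow> Im1 x = 0 \<and> Im2 x = 0 \<and> Im3 x = 0"
proof
  assume "x \<in> \<real>"
  then show "Im1 x = 0 \<and> Im2 x = 0 \<and> Im3 x = 0"
    by (auto elim!: Reals_cases simp: of_real_def quat_components)
next
  assume "Im1 x = 0 \<and> Im2 x = 0 \<and> Im3 x = 0"
  then have "x = of_real (Re x)"
    by (simp add: of_real_def quat_eq_iff quat_components)
  then show "x \<in> \<real>"
    by (metis Reals_of_real)
qed

lemma unit_quat_commute: "qcnj p * p = 1 \<Longrightarrow> p * qcnj p = 1"
  by (simp add: quat_eq_iff quat_components)

lemma unit_quat_qcnj: "qcnj p * p = 1 \<Longrightarrow> qcnj (qcnj p) * qcnj p = 1"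
  by (simp add: unit_quat_commute)

lemma unit_quat_mult: "qcnj p * p = 1 \<Longrightarrow> qcnj q * q = 1 \<Longrightarrow> qcnj (q * p) * (q * p) = 1"
  by (metis mult.assoc mult_1 qcnj_mult)

lemma Reals_conj_unit_quat:
  assumes "x \<in> \<real>" and "qcnj p * p = 1"
  shows "qcnj p * x * p = x"
proof -
  have "qcnj p * x * p = Re x *\<^sub>R (qcnj p * p)"
    using assms(1) by (simp add: quat_in_Reals_iff quat_eq_iff quat_components algebra_simps)
  then show ?thesis
    using assms by (simp add: quat_in_Reals_iff quat_eq_iff quat_components)
qed

lemma conj_unit_quat_eq_0_iff:
  assumes "qcnj p * p = 1" and "qcnj q * q = 1"
  shows "qcnj p * x * q = 0 \<longleftrightarrow> x = 0"
proof
  assume "qcnj p * x * q = 0"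
  then have "p * (qcnj p * x * q) * qcnj q = 0"
    by simp
  moreover have "p * (qcnj p * x * q) * qcnj q = (p * qcnj p) * x * (q * qcnj q)"
    by (simp add: mult.assoc)
  ultimately show "x = 0"
    using assms unit_quat_commute by simp
qed simp

lemma exists_unit_quat_mult_Reals:
  assumes "c \<noteq> 0"
  shows "\<exists>p. qcnj p * p = 1 \<and> c * p \<in> \<real>"
proof -
  define L where "L = Re c ^ 2 + Im1 c ^ 2 + Im2 c ^ 2 + Im3 c ^ 2"
  have "L > 0"
    using assms unfolding L_def quat_eq_iff quat_components
    by (smt (verit) sum_power2_eq_zero_iff zero_le_power2)
  then obtain k where k: "k * k * L = 1"
    by (intro that[of "1 / sqrt L"]) (simp add: field_simps)
  have "qcnj (k *\<^sub>R qcnj c) * (k *\<^sub>R qcnj c) = 1" "c * (k *\<^sub>R qcnj c) \<in> \<real>"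
    using k unfolding quat_in_Reals_iff quat_eq_iff L_def
    by (simp_all add: quat_components power2_eq_square algebra_simps)
  then show ?thesis
    by blast
qed

definition im_norm :: "quat \<Rightarrow> real"
  where "im_norm w = sqrt (Im1 w ^ 2 + Im2 w ^ 2 + Im3 w ^ 2)"

lemma im_norm_eq_norm: "im_norm w = norm (Im1 w, Im2 w, Im3 w)"
  by (simp add: im_norm_def norm_Pair)

lemma im_norm_nonneg: "im_norm w \<ge> 0"
  by (simp add: im_norm_def)

lemma im_norm_convex_combination:
  assumes "0 \<le> u" "u \<le> 1"
  shows "im_norm ((1 - u) *\<^sub>R a + u *\<^sub>R b) \<le> (1 - u) * im_norm a + u * im_norm b"
proof -
  let ?v = "\<lambda>w. (Im1 w, Im2 w, Im3 w)"
  have "im_norm ((1 - u) *\<^sub>R a + u *\<^sub>R b) = norm ((1 - u) *\<^sub>R ?v a + u *\<^sub>R ?v b)"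
    unfolding im_norm_eq_norm by (simp add: quat_components)
  also have "\<dots> \<le> norm ((1 - u) *\<^sub>R ?v a) + norm (u *\<^sub>R ?v b)"
    by (rule norm_triangle_ineq)
  also have "\<dots> = (1 - u) * im_norm a + u * im_norm b"
    using assms by (simp only: norm_scaleR im_norm_eq_norm abs_of_nonneg diff_ge_0_iff_ge)
  finally show ?thesis .
qed

lemma unit_quat_conj_to_i_axis:
  assumes m: "m\<^sup>2 = v1\<^sup>2 + v2\<^sup>2 + v3\<^sup>2" "m \<ge> 0" and v1: "v1 \<noteq> - m"
  shows "\<exists>p. qcnj p * p = 1 \<and> qcnj p * Quat a v1 v2 v3 * p = Quat a m 0 0"
proof -
  define L where "L = (v1 + m)\<^sup>2 + v2\<^sup>2 + v3\<^sup>2"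
  have "v1\<^sup>2 \<le> m\<^sup>2"
    using m(1) by simp
  then have "\<bar>v1\<bar> \<le> m"
    using m(2) abs_le_square_iff[of v1 m] by simp
  then have "L > 0"
    using v1 unfolding L_def by (smt (verit) zero_le_power2 zero_less_power2)
  then obtain k where k: "k * k * L = 1"
    by (intro that[of "1 / sqrt L"]) (simp add: field_simps)
  \<comment> \<open>conjugation by the unit along the bisector of (v1, v2, v3) and (m, 0, 0) swaps them\<close>
  define p where "p = Quat 0 ((v1 + m) * k) (v2 * k) (v3 * k)"
  have "qcnj p * p = 1"
    using k unfolding p_def L_def
    by (simp add: quat_eq_iff quat_components) (simp add: algebra_simps power2_eq_square)
  moreover have "qcnj p * Quat a v1 v2 v3 * p = Quat a m 0 0"
    using k m(1) unfolding p_def quat_eq_iff quat_components L_def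
    by (simp add: power2_eq_square; algebra)
  ultimately show ?thesis
    by blast
qed

lemma unit_quat_conj_to_complex:
  "\<exists>p. qcnj p * p = 1 \<and> qcnj p * w * p = Quat (Re w) (im_norm w) 0 0"
proof -
  obtain a v1 v2 v3 where w: "w = Quat a v1 v2 v3"
    by (cases w)
  define m where "m = im_norm w"
  have m: "m\<^sup>2 = v1\<^sup>2 + v2\<^sup>2 + v3\<^sup>2" "m \<ge> 0"
    unfolding m_def im_norm_def w by simp_all
  show ?thesis
  proof (cases "v1 = - m")
    case True
    then have "v2 = 0" "v3 = 0"
      using m(1) by (simp_all add: add_nonneg_eq_0_iff)
    then have "qcnj (Quat 0 0 1 0) * Quat 0 0 1 0 = 1 \<and>
        qcnj (Quat 0 0 1 0) * w * Quat 0 0 1 0 = Quat a m 0 0"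
      using True by (simp add: w quat_eq_iff quat_components)
    then show ?thesis
      unfolding m_def w by auto
  next
    case False
    then show ?thesis
      using unit_quat_conj_to_i_axis[OF m False, of a] unfolding m_def w by simp
  qed
qed

section \<open>The Toeplitz--Hausdorff theorem\<close>

definition sesq ::
    "nat \<Rightarrow> (nat \<Rightarrow> nat \<Rightarrow> complex) \<Rightarrow> (nat \<Rightarrow> complex) \<Rightarrow> (nat \<Rightarrow> complex) \<Rightarrow> complex"
  where "sesq n A x y = (\<Sum>i<n. \<Sum>j<n. cnj (x i) * A i j * y j)"

definition cinner :: "nat \<Rightarrow> (nat \<Rightarrow> complex) \<Rightarrow> (nat \<Rightarrow> complex) \<Rightarrow> complex"
  where "cinner n x y = (\<Sum>i<n. cnj (x i) * y i)"

definition cnumerical_range :: "nat \<Rightarrow> (nat \<Rightarrow> nat \<Rightarrow> complex) \<Rightarrow> complex set"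
  where "cnumerical_range n A = {sesq n A x x | x. cinner n x x = 1}"

lemma sesq_lincomb:
  "sesq n A (\<lambda>i. a * x i + b * y i) (\<lambda>i. a * x i + b * y i) =
    cnj a * a * sesq n A x x + cnj a * b * sesq n A x y + cnj b * a * sesq n A y x + cnj b * b * sesq n A y y"
  unfolding sesq_def by (simp add: algebra_simps sum.distrib sum_distrib_left)

lemma sesq_scale: "sesq n A (\<lambda>i. c * x i) (\<lambda>i. c * x i) = cnj c * c * sesq n A x x"
  using sesq_lincomb[of n A c x 0 x] by simp

lemma cinner_scale: "cinner n (\<lambda>i. c * x i) (\<lambda>i. c * x i) = cnj c * c * cinner n x x"
  unfolding cinner_def by (simp add: sum_distrib_left algebra_simps)

lemma sesq_cong: "(\<And>i. i < n \<Longrightarrow> x i = y i) \<Longrightarrow> sesq n A x x = sesq n A y y"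
  unfolding sesq_def by (intro sum.cong) auto

lemma sesq_shift:
  "sesq n (\<lambda>i j. (A i j - (if i = j then w else 0)) / d) x y = (sesq n A x y - w * cinner n x y) / d"
proof -
  have "cnj (x i) * ((A i j - (if i = j then w else 0)) / d) * y j =
      cnj (x i) * A i j * y j / d - (if j = i then cnj (x i) * w * y i / d else 0)" for i j
    by (auto simp: diff_divide_distrib algebra_simps)
  then show ?thesis
    unfolding sesq_def cinner_def
    by (simp add: sum_subtractf diff_divide_distrib sum_divide_distrib sum_distrib_left
        mult.assoc mult.left_commute)
qed

lemma cinner_self: "cinner n x x = of_real (\<Sum>i<n. (cmod (x i))\<^sup>2)"
  unfolding cinner_def of_real_sum by (intro sum.cong refl) (metis complex_norm_square mult.commute)

lemma Im_cinner_self [simp]: "Im (cinner n x x) = 0"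
  by (simp add: cinner_self)

lemma Re_cinner_self_nonneg: "Complex.Re (cinner n x x) \<ge> 0"
  by (simp add: cinner_self sum_nonneg)

lemma of_real_Re_cinner_self [simp]: "of_real (Complex.Re (cinner n x x)) = cinner n x x"
  by (simp add: complex_eq_iff)

lemma cinner_self_eq_0_iff: "cinner n x x = 0 \<longleftrightarrow> (\<forall>i<n. x i = 0)"
  unfolding cinner_self of_real_eq_0_iff by (auto simp: sum_nonneg_eq_0_iff)

lemma sesq_eq_0_if_cinner_eq_0: "cinner n x x = 0 \<Longrightarrow> sesq n A x x = 0"
  by (simp add: sesq_def cinner_self_eq_0_iff)

lemma rayleigh_quotient_in_cnumerical_range:
  assumes "cinner n x x \<noteq> 0"
  shows "sesq n A x x / cinner n x x \<in> cnumerical_range n A"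
proof -
  obtain s where s: "cinner n x x = of_real s" "s > 0"
    using assms cinner_self[of n x] by (metis less_eq_real_def of_real_0 sum_nonneg zero_le_power2)
  define c where "c = complex_of_real (1 / sqrt s)"
  have cc: "cnj c * c = 1 / cinner n x x"
    using s unfolding c_def by (simp flip: of_real_mult)
  have "cinner n (\<lambda>i. c * x i) (\<lambda>i. c * x i) = 1"
    using assms unfolding cinner_scale cc by simp
  moreover have "sesq n A (\<lambda>i. c * x i) (\<lambda>i. c * x i) = sesq n A x x / cinner n x x"
    unfolding sesq_scale cc by simp
  ultimately show ?thesis
    unfolding cnumerical_range_def by (metis (mono_tags, lifting) mem_Collect_eq)
qed

lemma exists_unit_phase_Im_eq_0: "\<exists>\<sigma>. cnj \<sigma> * \<sigma> = 1 \<and> Im (\<sigma> * k) = 0"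
proof (cases "k = 0")
  case False
  have "cnj \<sigma> * \<sigma> = 1 \<and> Im (\<sigma> * k) = 0" if "\<sigma> = cnj k / of_real (cmod k)" for \<sigma>
    using False unfolding that complex_norm_square
    by (simp add: power2_eq_square flip: of_real_mult complex_norm_square)
  then show ?thesis
    by blast
qed (intro exI[of _ 1], simp)

lemma sesq_intermediate_value:
  assumes x: "cinner n x x = 1" and y: "cinner n y y = 1"
    and Bx: "sesq n B x x = 0" and By: "sesq n B y y = 1"
    and v: "0 \<le> v" "v \<le> 1"
  shows "\<exists>z. cinner n z z \<noteq> 0 \<and> sesq n B z z = of_real v * cinner n z z"
proof -
  obtain \<sigma> where \<sigma>: "cnj \<sigma> * \<sigma> = 1" "Im (\<sigma> * (sesq n B y x - cnj (sesq n B x y))) = 0"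
    using exists_unit_phase_Im_eq_0 by blast
  define z where "z = (\<lambda>\<tau>::real. \<lambda>i. of_real (1 - \<tau>) * \<sigma> * x i + of_real \<tau> * y i)"
  have z0: "z 0 = (\<lambda>i. \<sigma> * x i)" and z1: "z 1 = y"
    by (simp_all add: z_def)
  \<comment> \<open>the phase \<sigma> makes the form real along the whole segment\<close>
  have Im_sesq_z: "Im (sesq n B (z \<tau>) (z \<tau>)) = 0" for \<tau>
  proof -
    have "sesq n B (z \<tau>) (z \<tau>) = of_real \<tau> ^ 2 +
        of_real (\<tau> * (1 - \<tau>)) * (cnj \<sigma> * sesq n B x y + \<sigma> * sesq n B y x)"
      unfolding z_def sesq_lincomb Bx By using \<sigma>(1) by (simp add: algebra_simps power2_eq_square)
    moreover have "Im (cnj \<sigma> * sesq n B x y + \<sigma> * sesq n B y x) = 0"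
      using \<sigma>(2) by (simp add: algebra_simps)
    ultimately show ?thesis
      by simp
  qed
  have z_nonzero: "cinner n (z \<tau>) (z \<tau>) \<noteq> 0" for \<tau>
  proof
    assume "cinner n (z \<tau>) (z \<tau>) = 0"
    then have z_zero: "\<forall>i<n. z \<tau> i = 0"
      by (simp add: cinner_self_eq_0_iff)
    show False
    proof (cases "\<tau> = 0")
      case True
      then show False
        using z_zero x \<sigma>(1) cinner_self_eq_0_iff[of n x] by (auto simp: z0)
    next
      case False
      define c where "c = - of_real (1 - \<tau>) * \<sigma> / of_real \<tau>"
      have "y i = c * x i" if "i < n" for i
        using z_zero that False by (auto simp: z_def c_def field_simps add_eq_0_iff)
      then have "sesq n B y y = sesq n B (\<lambda>i. c * x i) (\<lambda>i. c * x i)"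
        by (rule sesq_cong)
      then have "sesq n B y y = cnj c * c * sesq n B x x"
        by (simp add: sesq_scale)
      then show False
        using Bx By by simp
    qed
  qed
  define G where
    "G = (\<lambda>\<tau>. Complex.Re (sesq n B (z \<tau>) (z \<tau>)) / Complex.Re (cinner n (z \<tau>) (z \<tau>)))"
  have "continuous_on {0..1} (\<lambda>\<tau>. sesq n B (z \<tau>) (z \<tau>))"
    "continuous_on {0..1} (\<lambda>\<tau>. cinner n (z \<tau>) (z \<tau>))"
    unfolding sesq_def cinner_def z_def by (intro continuous_intros)+
  then have "continuous_on {0..1} G"
    unfolding G_def using z_nonzero by (intro continuous_intros) (auto simp: complex_eq_iff)
  moreover have "G 0 = 0" "G 1 = 1"
    by (simp_all add: G_def z0 z1 sesq_scale Bx By y)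
  ultimately obtain \<tau> where "G \<tau> = v"
    using IVT'[of G 0 v 1] v by force
  then have "sesq n B (z \<tau>) (z \<tau>) = of_real v * cinner n (z \<tau>) (z \<tau>)"
    using z_nonzero[of \<tau>] Im_sesq_z[of \<tau>]
    by (simp add: G_def complex_eq_iff field_simps)
  then show ?thesis
    using z_nonzero by blast
qed

theorem convex_cnumerical_range: "convex (cnumerical_range n A)"
  unfolding convex_alt
proof (intro ballI allI impI)
  fix a b and v :: real
  assume "a \<in> cnumerical_range n A" "b \<in> cnumerical_range n A" and v: "0 \<le> v \<and> v \<le> 1"
  then obtain x y where x: "cinner n x x = 1" "a = sesq n A x x"
    and y: "cinner n y y = 1" "b = sesq n A y y"
    unfolding cnumerical_range_def by blast
  have combination: "(1 - v) *\<^sub>R a + v *\<^sub>R b = a + of_real v * (b - a)"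
    by (simp add: scaleR_conv_of_real algebra_simps)
  show "(1 - v) *\<^sub>R a + v *\<^sub>R b \<in> cnumerical_range n A"
  proof (cases "a = b")
    case True
    then show ?thesis
      using \<open>a \<in> cnumerical_range n A\<close> by (simp add: combination)
  next
    case False
    define B where "B = (\<lambda>i j. (A i j - (if i = j then a else 0)) / (b - a))"
    have B: "sesq n B u u = (sesq n A u u - a * cinner n u u) / (b - a)" for u
      unfolding B_def by (rule sesq_shift)
    obtain z where z: "cinner n z z \<noteq> 0" "sesq n B z z = of_real v * cinner n z z"
      using sesq_intermediate_value[of n x y B v] x y v False by (auto simp: B)
    then have "sesq n A z z / cinner n z z = a + of_real v * (b - a)"
      using False by (simp add: B field_simps)
    then show ?thesis
      using rayleigh_quotient_in_cnumerical_range[OF z(1), of A] by (simp add: combination)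
  qed
qed

lemma sesq_add_in_cnumerical_range:
  assumes "cinner n y y + cinner n z z = 1"
  shows "sesq n A y y + sesq n A z z \<in> cnumerical_range n A"
proof (cases "cinner n y y = 0 \<or> cinner n z z = 0")
  case True
  then show ?thesis
    using assms sesq_eq_0_if_cinner_eq_0[of n y A] sesq_eq_0_if_cinner_eq_0[of n z A]
    unfolding cnumerical_range_def by auto
next
  case False
  define t where "t = Complex.Re (cinner n z z)"
  have y: "cinner n y y = of_real (1 - t)" and z: "cinner n z z = of_real t"
    using assms by (simp_all add: t_def complex_eq_iff)
  have t: "0 \<le> t" "t \<le> 1"
    using Re_cinner_self_nonneg[of n y] Re_cinner_self_nonneg[of n z] unfolding y z by simp_all
  have "(1 - t) *\<^sub>R (sesq n A y y / cinner n y y) + t *\<^sub>R (sesq n A z z / cinner n z z)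
      \<in> cnumerical_range n A"
    using convex_cnumerical_range[of n A] rayleigh_quotient_in_cnumerical_range False t
    unfolding convex_alt by blast
  then show ?thesis
    using False unfolding y z by (simp add: scaleR_conv_of_real)
qed

section \<open>Quaternion sets closed under unitary similarity\<close>

lemma convex_cnj_closed_shrink_Im:
  fixes S :: "complex set"
  assumes "convex S" and "\<And>z. z \<in> S \<Longrightarrow> cnj z \<in> S" and "z \<in> S" and "0 \<le> s" "s \<le> 1"
  shows "Complex (Complex.Re z) (s * Im z) \<in> S"
proof -
  have "Complex (Complex.Re z) (s * Im z) = (1 - (1 - s) / 2) *\<^sub>R z + ((1 - s) / 2) *\<^sub>R cnj z"
    by (simp add: complex_eq_iff field_simps)
  then show ?thesis
    using assms unfolding convex_alt by simp
qed

definition quat_of_complex :: "complex \<Rightarrow> quat"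
  where "quat_of_complex z = Quat (Complex.Re z) (Im z) 0 0"

lemma unit_conj_closed_mem_iff:
  fixes W :: "quat set"
  assumes closed: "\<And>w p. w \<in> W \<Longrightarrow> qcnj p * p = 1 \<Longrightarrow> qcnj p * w * p \<in> W"
  shows "w \<in> W \<longleftrightarrow> Complex (Re w) (im_norm w) \<in> quat_of_complex -` W"
proof -
  obtain p where p: "qcnj p * p = 1" "qcnj p * w * p = Quat (Re w) (im_norm w) 0 0"
    using unit_quat_conj_to_complex by blast
  have "qcnj (qcnj p) * (qcnj p * w * p) * qcnj p = (p * qcnj p) * w * (p * qcnj p)"
    by (simp add: mult.assoc)
  also have "\<dots> = w"
    using unit_quat_commute[OF p(1)] by simp
  finally show ?thesis
    using closed[of w p] closed[of "Quat (Re w) (im_norm w) 0 0" "qcnj p"] p unit_quat_qcnj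
    by (auto simp: quat_of_complex_def)
qed

lemma unit_conj_closed_cnj:
  fixes W :: "quat set"
  assumes closed: "\<And>w p. w \<in> W \<Longrightarrow> qcnj p * p = 1 \<Longrightarrow> qcnj p * w * p \<in> W"
    and "z \<in> quat_of_complex -` W"
  shows "cnj z \<in> quat_of_complex -` W"
proof -
  have "quat_of_complex (cnj z) = qcnj (Quat 0 0 1 0) * quat_of_complex z * Quat 0 0 1 0"
    by (simp add: quat_of_complex_def quat_eq_iff quat_components)
  moreover have "qcnj (Quat 0 0 1 0) * Quat 0 0 1 0 = 1"
    by (simp add: quat_eq_iff quat_components)
  ultimately show ?thesis
    using closed[of "quat_of_complex z" "Quat 0 0 1 0"] assms(2) by simp
qed

theorem convex_if_unit_conj_closed:
  fixes W :: "quat set"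
  assumes closed: "\<And>w p. w \<in> W \<Longrightarrow> qcnj p * p = 1 \<Longrightarrow> qcnj p * w * p \<in> W"
    and slice: "convex (quat_of_complex -` W)"
  shows "convex W"
  unfolding convex_alt
proof (intro ballI allI impI)
  let ?S = "quat_of_complex -` W"
  fix a b and u :: real
  assume a: "a \<in> W" and b: "b \<in> W" and u: "0 \<le> u \<and> u \<le> 1"
  define T where "T = (1 - u) *\<^sub>R a + u *\<^sub>R b"
  define M where "M = (1 - u) * im_norm a + u * im_norm b"
  have "im_norm T \<le> M"
    unfolding T_def M_def using u by (simp add: im_norm_convex_combination)
  \<comment> \<open>shrinking both imaginary parts by the same factor s hits the imaginary norm of T\<close>
  then obtain s where s: "0 \<le> s" "s \<le> 1" "s * M = im_norm T"
  proof (cases "M = 0")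
    case True
    then show thesis
      using that[of 0] \<open>im_norm T \<le> M\<close> im_norm_nonneg[of T] by simp
  next
    case False
    then show thesis
      using that[of "im_norm T / M"] \<open>im_norm T \<le> M\<close> im_norm_nonneg[of T]
      by (simp add: divide_le_eq_1)
  qed
  have "Complex (Re w) (s * im_norm w) \<in> ?S" if "w \<in> W" for w
  proof -
    have "Complex (Re w) (im_norm w) \<in> ?S"
      using unit_conj_closed_mem_iff[OF closed] that by blast
    from convex_cnj_closed_shrink_Im[OF slice unit_conj_closed_cnj[OF closed] this s(1,2)]
    show ?thesis
      unfolding complex.sel .
  qed
  then have "(1 - u) *\<^sub>R Complex (Re a) (s * im_norm a) + u *\<^sub>R Complex (Re b) (s * im_norm b)
      \<in> ?S"
    using slice u a b unfolding convex_alt by blast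
  moreover have "(1 - u) *\<^sub>R Complex (Re a) (s * im_norm a) + u *\<^sub>R Complex (Re b) (s * im_norm b)
      = Complex (Re T) (im_norm T)"
    using s(3) by (simp add: complex_eq_iff T_def M_def quat_components algebra_simps)
  ultimately have "Complex (Re T) (im_norm T) \<in> ?S"
    by metis
  then show "T \<in> W"
    using unit_conj_closed_mem_iff[OF closed] by blast
qed

section \<open>Numerical ranges of real matrices\<close>

lemma numerical_range_conj_unit_quat:
  assumes "w \<in> numerical_range n A" and "qcnj p * p = 1"
  shows "qcnj p * w * p \<in> numerical_range n A"
proof -
  obtain x where x: "w = (\<Sum>i<n. \<Sum>j<n. qcnj (x i) * A i j * x j)" "(\<Sum>i<n. qcnj (x i) * x i) = 1"
    using assms(1) unfolding numerical_range_def by blast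
  have "(\<Sum>i<n. qcnj (x i * p) * (x i * p)) = qcnj p * (\<Sum>i<n. qcnj (x i) * x i) * p"
    unfolding qcnj_mult by (simp add: sum_distrib_left sum_distrib_right mult.assoc)
  moreover have "(\<Sum>i<n. \<Sum>j<n. qcnj (x i * p) * A i j * (x j * p)) = qcnj p * w * p"
    unfolding x(1) qcnj_mult by (simp add: sum_distrib_left sum_distrib_right mult.assoc)
  ultimately show ?thesis
    using x(2) assms(2) unfolding numerical_range_def by force
qed

definition real_part_matrix :: "(nat \<Rightarrow> nat \<Rightarrow> quat) \<Rightarrow> nat \<Rightarrow> nat \<Rightarrow> complex"
  where "real_part_matrix R i j = of_real (Re (R i j))"

theorem complex_slice_numerical_range_Reals:
  assumes real: "\<And>i j. i < n \<Longrightarrow> j < n \<Longrightarrow> R i j \<in> \<real>"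
  shows "quat_of_complex -` numerical_range n R = cnumerical_range n (real_part_matrix R)"
proof -
  have R_Im: "Im1 (R i j) = 0" "Im2 (R i j) = 0" "Im3 (R i j) = 0" if "i < n" "j < n" for i j
    using real[OF that] by (simp_all add: quat_in_Reals_iff)
  have "c \<in> cnumerical_range n (real_part_matrix R)"
    if c: "quat_of_complex c \<in> numerical_range n R" for c
  proof -
    obtain X where X: "(\<Sum>i<n. qcnj (X i) * X i) = 1"
      "quat_of_complex c = (\<Sum>i<n. \<Sum>j<n. qcnj (X i) * R i j * X j)"
      using c unfolding numerical_range_def by blast
    \<comment> \<open>write X = y + z j with complex vectors y and z\<close>
    define y where "y i = Complex (Re (X i)) (Im1 (X i))" for i
    define z where "z i = Complex (Im2 (X i)) (- Im3 (X i))" for i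
    have "c = sesq n (real_part_matrix R) y y + sesq n (real_part_matrix R) z z"
      using X(2) unfolding quat_of_complex_def quat_eq_iff complex_eq_iff sesq_def
        quat_components_sum Re_sum Im_sum sum.distrib[symmetric]
      by (simp add: y_def z_def real_part_matrix_def R_Im quat_components algebra_simps)
    moreover have "cinner n y y + cinner n z z = 1"
      using arg_cong[OF X(1), of Re]
      unfolding complex_eq_iff cinner_def quat_components_sum Re_sum Im_sum sum.distrib[symmetric]
      by (simp add: y_def z_def quat_components algebra_simps)
    ultimately show ?thesis
      by (simp add: sesq_add_in_cnumerical_range)
  qed
  moreover have "quat_of_complex c \<in> numerical_range n R"
    if c: "c \<in> cnumerical_range n (real_part_matrix R)" for c
  proof -
    obtain y where y: "cinner n y y = 1" "c = sesq n (real_part_matrix R) y y"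
      using c unfolding cnumerical_range_def by blast
    define X where "X i = quat_of_complex (y i)" for i
    have "(\<Sum>i<n. qcnj (X i) * X i) = 1"
      using arg_cong[OF y(1), of Complex.Re] arg_cong[OF y(1), of Im]
      unfolding quat_eq_iff cinner_def quat_components_sum Re_sum Im_sum
      by (simp add: X_def quat_of_complex_def quat_components algebra_simps)
    moreover have "quat_of_complex c = (\<Sum>i<n. \<Sum>j<n. qcnj (X i) * R i j * X j)"
      unfolding y(2) quat_eq_iff quat_of_complex_def sesq_def quat_components_sum Re_sum Im_sum
      by (intro conjI sum.cong refl; simp add: X_def quat_of_complex_def real_part_matrix_def R_Im
          quat_components algebra_simps)
    ultimately show ?thesis
      unfolding numerical_range_def by auto
  qed
  ultimately show ?thesis
    by blast
qed

theorem convex_numerical_range_Reals: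
  assumes "\<And>i j. i < n \<Longrightarrow> j < n \<Longrightarrow> R i j \<in> \<real>"
  shows "convex (numerical_range n R)"
  by (rule convex_if_unit_conj_closed)
    (simp_all add: numerical_range_conj_unit_quat complex_slice_numerical_range_Reals[OF assms]
      convex_cnumerical_range)

section \<open>Diagonal unitary similarity and cycle-free matrices\<close>

lemma numerical_range_cong:
  "(\<And>i j. i < n \<Longrightarrow> j < n \<Longrightarrow> A i j = B i j) \<Longrightarrow>
    numerical_range n A = numerical_range n B"
  unfolding numerical_range_def by (intro arg_cong[where f = "\<lambda>P. {w. P w}"] ext ex_cong1) auto

lemma numerical_range_diag_conj_subset:
  assumes unit: "\<forall>i<n. qcnj (q i) * q i = 1"
  shows "numerical_range n (\<lambda>i j. qcnj (q i) * A i j * q j) \<subseteq> numerical_range n A"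
proof
  fix w
  assume "w \<in> numerical_range n (\<lambda>i j. qcnj (q i) * A i j * q j)"
  then obtain y where y: "(\<Sum>i<n. qcnj (y i) * y i) = 1"
    "w = (\<Sum>i<n. \<Sum>j<n. qcnj (y i) * (qcnj (q i) * A i j * q j) * y j)"
    unfolding numerical_range_def by blast
  have "qcnj (q i * y i) * (q i * y i) = qcnj (y i) * y i" if "i < n" for i
    using unit that by (metis mult.assoc mult_1 qcnj_mult)
  then have "(\<Sum>i<n. qcnj (q i * y i) * (q i * y i)) = 1"
    using y(1) by simp
  moreover have "w = (\<Sum>i<n. \<Sum>j<n. qcnj (q i * y i) * A i j * (q j * y j))"
    unfolding y(2) by (simp add: qcnj_mult mult.assoc)
  ultimately show "w \<in> numerical_range n A"
    unfolding numerical_range_def by (auto intro!: exI[of _ "\<lambda>i. q i * y i"])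
qed

lemma numerical_range_diag_conj:
  assumes unit: "\<forall>i<n. qcnj (q i) * q i = 1"
  shows "numerical_range n (\<lambda>i j. qcnj (q i) * A i j * q j) = numerical_range n A"
proof
  have "numerical_range n A =
      numerical_range n (\<lambda>i j. qcnj (qcnj (q i)) * (qcnj (q i) * A i j * q j) * qcnj (q j))"
  proof (intro numerical_range_cong)
    fix i j
    assume "i < n" "j < n"
    then have "q i * qcnj (q i) = 1" "q j * qcnj (q j) = 1"
      using unit unit_quat_commute by auto
    moreover have "qcnj (qcnj (q i)) * (qcnj (q i) * A i j * q j) * qcnj (q j) =
        (q i * qcnj (q i)) * A i j * (q j * qcnj (q j))"
      by (simp add: mult.assoc)
    ultimately show "A i j = qcnj (qcnj (q i)) * (qcnj (q i) * A i j * q j) * qcnj (q j)"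
      by simp
  qed
  also have "\<dots> \<subseteq> numerical_range n (\<lambda>i j. qcnj (q i) * A i j * q j)"
    using unit unit_quat_qcnj by (intro numerical_range_diag_conj_subset) simp
  finally show "numerical_range n A \<subseteq> numerical_range n (\<lambda>i j. qcnj (q i) * A i j * q j)" .
qed (rule numerical_range_diag_conj_subset[OF unit])

lemma cycle_free_subgraph:
  "cycle_free n N \<Longrightarrow> (\<And>a b. mat_adj M a b \<Longrightarrow> mat_adj N a b) \<Longrightarrow> cycle_free n M"
  unfolding cycle_free_def by blast

lemma mat_adj_remove_entry:
  "mat_adj (\<lambda>a b. if a = i \<and> b = j then 0 else N a b) a b \<Longrightarrow> mat_adj N a b"
  unfolding mat_adj_def by (metis (full_types))

lemma cycle_free_remove_edge_disconnects:
  assumes cf: "cycle_free n N" and ij: "i < n" "j < n" "N i j \<noteq> 0" "N j i = 0"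
  shows "\<not> (\<lambda>a b. a < n \<and> b < n \<and>
      mat_adj (\<lambda>a b. if a = i \<and> b = j then 0 else N a b) a b)\<^sup>*\<^sup>* j i"
proof
  let ?r = "\<lambda>a b. a < n \<and> b < n \<and>
    mat_adj (\<lambda>a b. if a = i \<and> b = j then 0 else N a b) a b"
  have r_adj: "mat_adj N a b" if "?r a b" for a b
    using that mat_adj_remove_entry by blast
  assume "?r\<^sup>*\<^sup>* j i"
  then obtain xs0 where "rtrancl_path ?r j xs0 i"
    unfolding rtranclp_eq_rtrancl_path by blast
  then obtain xs where path: "rtrancl_path ?r j xs i" and dist: "distinct (j # xs)"
    by (rule rtrancl_path_distinct)
  have "i \<noteq> j"
    using cf ij unfolding cycle_free_def mat_adj_def by auto
  have "xs \<noteq> []"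
  proof
    assume "xs = []"
    from path this have "j = i"
      by (cases rule: rtrancl_path.cases) simp_all
    with \<open>i \<noteq> j\<close> show False
      by simp
  qed
  have "xs \<noteq> [i]"
  proof
    assume "xs = [i]"
    then have "?r j i"
      using rtrancl_path_nth[OF path, of 0] by simp
    with ij(4) \<open>i \<noteq> j\<close> show False
      unfolding mat_adj_def by simp
  qed
  have last: "last xs = i"
    using rtrancl_path_last[OF path \<open>xs \<noteq> []\<close>] .
  have len: "length xs \<ge> 2"
  proof (cases xs)
    case (Cons a ys)
    then show ?thesis
      using \<open>xs \<noteq> [i]\<close> last by (cases ys) auto
  qed (use \<open>xs \<noteq> []\<close> in simp)
  define vs where "vs = j # xs"
  have "set vs \<subseteq> {..<n}"
    using rtrancl_path_Range[OF path] \<open>j < n\<close> unfolding vs_def by auto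
  moreover have "mat_adj N (vs ! k) (vs ! ((k + 1) mod length vs))" if "k < length vs" for k
  proof (cases "k + 1 < length vs")
    case True
    then show ?thesis
      using r_adj rtrancl_path_nth[OF path, of k] unfolding vs_def by simp
  next
    case False
    \<comment> \<open>the removed edge closes the path into a cycle\<close>
    then have k: "k = length xs"
      using that unfolding vs_def by simp
    then have "vs ! k = i" "(k + 1) mod length vs = 0"
      using last \<open>xs \<noteq> []\<close> unfolding vs_def by (simp_all add: last_conv_nth nth_Cons')
    then show ?thesis
      using ij(3) unfolding vs_def mat_adj_def by simp
  qed
  moreover have "3 \<le> length vs" "distinct vs"
    using len dist unfolding vs_def by simp_all
  ultimately show False
    using cf unfolding cycle_free_def by blast
qed

lemma rephase_closed_set_Reals:
  assumes real: "\<forall>a<n. \<forall>b<n. qcnj (q a) * M a b * q b \<in> \<real>" and p: "qcnj p * p = 1"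
    and closed: "\<And>a b. a < n \<Longrightarrow> b < n \<Longrightarrow> M a b \<noteq> 0 \<Longrightarrow> a \<in> C \<longleftrightarrow> b \<in> C"
  shows "\<forall>a<n. \<forall>b<n.
    qcnj (if a \<in> C then q a * p else q a) * M a b * (if b \<in> C then q b * p else q b) \<in> \<real>"
proof (intro allI impI)
  fix a b
  assume ab: "a < n" "b < n"
  show "qcnj (if a \<in> C then q a * p else q a) * M a b * (if b \<in> C then q b * p else q b) \<in> \<real>"
  proof (cases "M a b = 0")
    case False
    then have iff: "a \<in> C \<longleftrightarrow> b \<in> C"
      using closed ab by blast
    show ?thesis
    proof (cases "a \<in> C")
      case True
      then have "qcnj (q a * p) * M a b * (q b * p) = qcnj p * (qcnj (q a) * M a b * q b) * p"
        by (simp add: qcnj_mult mult.assoc)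
      then show ?thesis
        using True iff real ab Reals_conj_unit_quat[OF _ p] by simp
    next
      case False
      then show ?thesis
        using iff real ab by simp
    qed
  qed simp
qed

definition entry_support :: "nat \<Rightarrow> (nat \<Rightarrow> nat \<Rightarrow> quat) \<Rightarrow> (nat \<times> nat) set"
  where "entry_support n N = {(i, j). i < n \<and> j < n \<and> N i j \<noteq> 0}"

lemma finite_entry_support: "finite (entry_support n N)"
  unfolding entry_support_def by (rule finite_subset[of _ "{..<n} \<times> {..<n}"]) auto

lemma diag_unitary_Reals_add_edge:
  fixes N :: "nat \<Rightarrow> nat \<Rightarrow> quat" and i j :: nat
  defines "N' \<equiv> \<lambda>a b. if a = i \<and> b = j then 0 else N a b"
  assumes cf: "cycle_free n N" and ij: "i < n" "j < n" "N i j \<noteq> 0" "N j i = 0"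
    and q'_unit: "\<forall>a<n. qcnj (q' a) * q' a = 1"
    and q'_real: "\<forall>a<n. \<forall>b<n. qcnj (q' a) * N' a b * q' b \<in> \<real>"
  shows "\<exists>q. (\<forall>a<n. qcnj (q a) * q a = 1) \<and> (\<forall>a<n. \<forall>b<n. qcnj (q a) * N a b * q b \<in> \<real>)"
proof -
  \<comment> \<open>rephase the component of j in the graph of N', which does not contain i\<close>
  define C where "C = {b. (\<lambda>a b. a < n \<and> b < n \<and> mat_adj N' a b)\<^sup>*\<^sup>* j b}"
  have C_closed: "a \<in> C \<longleftrightarrow> b \<in> C" if "a < n" "b < n" "N' a b \<noteq> 0" for a b
    using that unfolding C_def mat_adj_def by (auto intro: rtranclp.rtrancl_into_rtrancl)
  have "i \<notin> C"
    using cycle_free_remove_edge_disconnects[OF cf ij] unfolding C_def N'_def by simp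
  define c where "c = qcnj (q' i) * N i j * q' j"
  have "c \<noteq> 0"
    unfolding c_def using conj_unit_quat_eq_0_iff q'_unit ij by simp
  then obtain p where p: "qcnj p * p = 1" "c * p \<in> \<real>"
    using exists_unit_quat_mult_Reals by blast
  define q where "q a = (if a \<in> C then q' a * p else q' a)" for a
  have real': "\<forall>a<n. \<forall>b<n. qcnj (q a) * N' a b * q b \<in> \<real>"
    unfolding q_def by (rule rephase_closed_set_Reals[OF q'_real p(1) C_closed])
  have "qcnj (q a) * N a b * q b \<in> \<real>" if "a < n" "b < n" for a b
  proof (cases "a = i \<and> b = j")
    case True
    then have "qcnj (q a) * N a b * q b = c * p"
      using \<open>i \<notin> C\<close> unfolding q_def c_def C_def by (simp add: mult.assoc)
    then show ?thesis
      using p(2) by simp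
  next
    case False
    then have "N' a b = N a b"
      unfolding N'_def by auto
    then show ?thesis
      using real' that by metis
  qed
  moreover have "\<forall>a<n. qcnj (q a) * q a = 1"
    using q'_unit p(1) unit_quat_mult unfolding q_def by simp
  ultimately show ?thesis
    by blast
qed

theorem cycle_free_diag_unitary_Reals:
  fixes N :: "nat \<Rightarrow> nat \<Rightarrow> quat"
  assumes "\<forall>i<n. \<forall>j<n. N i j \<noteq> 0 \<longrightarrow> N j i = 0" and "cycle_free n N"
  shows "\<exists>q. (\<forall>i<n. qcnj (q i) * q i = 1) \<and> (\<forall>i<n. \<forall>j<n. qcnj (q i) * N i j * q j \<in> \<real>)"
  using assms
proof (induction "card (entry_support n N)" arbitrary: N)
  case 0
  then have "\<forall>i<n. \<forall>j<n. N i j = 0"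
    using finite_entry_support[of n N] unfolding entry_support_def by auto
  then show ?case
    by (intro exI[of _ "\<lambda>_. 1"]) simp
next
  case (Suc k N)
  have "entry_support n N \<noteq> {}"
    using Suc.hyps(2) by auto
  then obtain i j where ij: "i < n" "j < n" "N i j \<noteq> 0"
    unfolding entry_support_def by blast
  define N' where "N' = (\<lambda>a b. if a = i \<and> b = j then 0 else N a b)"
  have "entry_support n N' = entry_support n N - {(i, j)}"
    unfolding N'_def entry_support_def by auto
  then have "k = card (entry_support n N')"
    using Suc.hyps(2) ij finite_entry_support by (simp add: entry_support_def)
  moreover have "\<forall>a<n. \<forall>b<n. N' a b \<noteq> 0 \<longrightarrow> N' b a = 0"
    using Suc.prems(1) unfolding N'_def by auto
  moreover have "cycle_free n N'"
    using Suc.prems(2) unfolding N'_def by (rule cycle_free_subgraph) (rule mat_adj_remove_entry)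
  ultimately obtain q' where "\<forall>a<n. qcnj (q' a) * q' a = 1"
    and "\<forall>a<n. \<forall>b<n. qcnj (q' a) * N' a b * q' b \<in> \<real>"
    using Suc.hyps(1) by blast
  then show ?case
    using diag_unitary_Reals_add_edge[OF Suc.prems(2) ij] Suc.prems(1) ij unfolding N'_def by blast
qed

theorem corollary4p3:
  fixes n :: nat and D N :: "nat \<Rightarrow> nat \<Rightarrow> quat"
  assumes D_diag: "\<forall>i<n. \<forall>j<n. i \<noteq> j \<longrightarrow> D i j = 0"
    and D_real: "\<forall>i<n. D i i \<in> \<real>"
    and N_strict_upper: "\<forall>i<n. \<forall>j<n. j \<le> i \<longrightarrow> N i j = 0"
    and N_cycle_free: "cycle_free n N"
  shows "convex (numerical_range n (\<lambda>i j. D i j + N i j))"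
proof -
  have "\<forall>i<n. \<forall>j<n. N i j \<noteq> 0 \<longrightarrow> N j i = 0"
    using N_strict_upper by (meson linear)
  then obtain q where unit: "\<forall>i<n. qcnj (q i) * q i = 1"
    and real: "\<forall>i<n. \<forall>j<n. qcnj (q i) * N i j * q j \<in> \<real>"
    using cycle_free_diag_unitary_Reals[OF _ N_cycle_free] by blast
  have "qcnj (q i) * (D i j + N i j) * q j \<in> \<real>" if "i < n" "j < n" for i j
    using that unit real N_strict_upper D_diag D_real Reals_conj_unit_quat
    by (cases "i = j") (simp_all add: distrib_left distrib_right)
  then have "convex (numerical_range n (\<lambda>i j. qcnj (q i) * (D i j + N i j) * q j))"
    by (rule convex_numerical_range_Reals)
  then show ?thesis
    unfolding numerical_range_diag_conj[OF unit] .
qed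

end
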